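(* Assume there is an algorithm $\textsc{Alg}$ that, given a graph $G=(V,E)$ with $|V|=n$ in a dynamic stream, uses $\widetilde{O}(n)$ space and outputs a spanner of $G$ with stretch $\widetilde{O}(n^{\beta})$, for some constant $\beta\in(0,1)$, with failure probability $n^{-c}$ for some constant $c$. Then, for any constant $\alpha\in(0,1)$, one can construct an algorithm that uses $\widetilde{O}(n^{1+\alpha})$ space and outputs a spanner with stretch $\widetilde{O}(n^{\beta(1-\alpha)})$ with failure probability $\widetilde{O}(n^{(2+c)\alpha-c})$.
   Context: Dynamic stream model: a fixed vertex set $V$ of $n$ vertices is known; the (unweighted, undirected) graph's edges arrive as a stream of insertions and deletions; algorithms process the stream with limited memory (space, in bits). A subgraph $K$ of $G$ is a spanner with stretch $t$ if $d_K(u,v)\le t\cdot d_G(u,v)$ for all $u,v\in V$ ($d$ = shortest-path distance). $\widetilde{O}(f)$ means $f\cdot\mathrm{polylog}(n)$. *)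

theory Defs
  imports "HOL-Probability.Probability"
begin

(* Vertex set V = {0..<n}. An (undirected) edge is a pair (u,v) with u < v < n. *)
definition edges :: "nat \<Rightarrow> (nat \<times> nat) set" where
  "edges n = {(u,v). u < v \<and> v < n}"

datatype upd = Ins "nat \<times> nat" | Del "nat \<times> nat"

fun valid_from :: "nat \<Rightarrow> (nat \<times> nat) set \<Rightarrow> upd list \<Rightarrow> bool" where
  "valid_from n S [] = True"
| "valid_from n S (Ins e # \<sigma>) = (e \<in> edges n \<and> e \<notin> S \<and> valid_from n (insert e S) \<sigma>)"
| "valid_from n S (Del e # \<sigma>) = (e \<in> S \<and> valid_from n (S - {e}) \<sigma>)"

definition valid_stream :: "nat \<Rightarrow> upd list \<Rightarrow> bool" where
  "valid_stream n \<sigma> = valid_from n {} \<sigma>"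

fun apply_upd :: "(nat \<times> nat) set \<Rightarrow> upd \<Rightarrow> (nat \<times> nat) set" where
  "apply_upd S (Ins e) = insert e S"
| "apply_upd S (Del e) = S - {e}"

definition final_graph :: "upd list \<Rightarrow> (nat \<times> nat) set" where
  "final_graph \<sigma> = foldl apply_upd {} \<sigma>"

definition adj :: "(nat \<times> nat) set \<Rightarrow> nat \<Rightarrow> nat \<Rightarrow> bool" where
  "adj E u v \<longleftrightarrow> (u, v) \<in> E \<or> (v, u) \<in> E"

definition is_walk :: "(nat \<times> nat) set \<Rightarrow> nat \<Rightarrow> nat \<Rightarrow> nat list \<Rightarrow> bool" where
  "is_walk E u v p \<longleftrightarrow> p \<noteq> [] \<and> hd p = u \<and> last p = v \<and>
     (\<forall>i. Suc i < length p \<longrightarrow> adj E (p ! i) (p ! Suc i))"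

(* shortest-path distance (number of edges); infinity if not connected *)
definition gdist :: "(nat \<times> nat) set \<Rightarrow> nat \<Rightarrow> nat \<Rightarrow> enat" where
  "gdist E u v = (INF p \<in> {p. is_walk E u v p}. enat (length p - 1))"

definition is_spanner :: "nat \<Rightarrow> (nat \<times> nat) set \<Rightarrow> (nat \<times> nat) set \<Rightarrow> real \<Rightarrow> bool" where
  "is_spanner n G K t \<longleftrightarrow> K \<subseteq> G \<and>
     (\<forall>u<n. \<forall>v<n. \<forall>m. gdist G u v = enat m \<longrightarrow>
        (\<exists>m'. gdist K u v = enat m' \<and> real m' \<le> t * real m))"

record det_alg =
  init_st :: "bool list"
  step_fn :: "upd \<Rightarrow> bool list \<Rightarrow> bool list"
  out_fn :: "bool list \<Rightarrow> (nat \<times> nat) set"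

definition run :: "det_alg \<Rightarrow> upd list \<Rightarrow> bool list" where
  "run D \<sigma> = foldl (\<lambda>s x. step_fn D x s) (init_st D) \<sigma>"

(* A randomized streaming algorithm: for each n (the known vertex set {0..<n}) a
   probability distribution over deterministic algorithms (random bits = choice of D). *)
type_synonym rand_alg = "nat \<Rightarrow> det_alg pmf"

(* space bound in bits: the memory never exceeds s bits on any valid stream
   (prefixes of valid streams are valid, so this covers all intermediate states) *)
definition space_le :: "rand_alg \<Rightarrow> nat \<Rightarrow> real \<Rightarrow> bool" where
  "space_le A n s \<longleftrightarrow> (\<forall>D \<in> set_pmf (A n). \<forall>\<sigma>. valid_stream n \<sigma> \<longrightarrow> real (length (run D \<sigma>)) \<le> s)"

definition fail_prob :: "rand_alg \<Rightarrow> nat \<Rightarrow> real \<Rightarrow> upd list \<Rightarrow> real" where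
  "fail_prob A n t \<sigma> = measure_pmf.prob (A n)
      {D. \<not> is_spanner n (final_graph \<sigma>) (out_fn D (run D \<sigma>)) t}"

definition softO :: "(nat \<Rightarrow> real) \<Rightarrow> (nat \<Rightarrow> real) set" where
  "softO g = {f. \<exists>C k. \<forall>\<^sub>F n in sequentially. \<bar>f n\<bar> \<le> C * g n * (ln (real n)) ^ k}"

end

theory Submission
  imports Defs
begin

(* Split the vertices {0..<n} into blocks of b ~ n^(1 - alpha) consecutive vertices, so that
   there are about n^alpha blocks and every edge lies in the union of two of them, a graph on at
   most 2b vertices.  Run one copy of Alg on each of the ~ n^(2 alpha) such pair subgraphs, with
   its vertices renamed into {0..<2b}, and output the union of the returned spanners.  A shortest
   path of G is stretched edge by edge, each edge inside one copy, so the stretch is that of a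
   single copy, O~(b^beta) = O~(n^(beta (1 - alpha))); the space is n^(2 alpha) O~(b) =
   O~(n^(1 + alpha)); and a union bound over the pairs bounds the failure probability by
   n^(2 alpha) b^(-c) <= n^((2 + c) alpha - c). *)

section \<open>Packing several states into one bit string\<close>

definition pack_states :: "bool list list \<Rightarrow> bool list" where
  "pack_states L = concat (map (\<lambda>x. concat (map (\<lambda>b. [True, b]) x) @ [False]) L)"

fun unpack_aux :: "bool list \<Rightarrow> bool list \<Rightarrow> bool list list" where
  "unpack_aux acc [] = []"
| "unpack_aux acc (False # r) = rev acc # unpack_aux [] r"
| "unpack_aux acc (True # b # r) = unpack_aux (b # acc) r"
| "unpack_aux acc [True] = []"

definition unpack_states :: "bool list \<Rightarrow> bool list list" where
  "unpack_states s = unpack_aux [] s"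

lemma unpack_aux_pack:
  "unpack_aux acc (concat (map (\<lambda>b. [True, b]) x) @ False # r) = (rev acc @ x) # unpack_aux [] r"
  by (induction x arbitrary: acc) auto

lemma unpack_pack_states [simp]: "unpack_states (pack_states L) = L"
  by (induction L) (simp_all add: unpack_states_def pack_states_def unpack_aux_pack[of "[]"])

lemma length_pack_states_le:
  assumes "\<And>x. x \<in> set L \<Longrightarrow> real (length x) \<le> s"
  shows "real (length (pack_states L)) \<le> real (length L) * (2 * s + 1)"
  using assms
proof (induction L)
  case (Cons x L)
  have "length (concat (map (\<lambda>b. [True, b]) x)) = 2 * length x"
    by (induction x) auto
  then have "length (pack_states (x # L)) = 2 * length x + 1 + length (pack_states L)"
    by (simp add: pack_states_def)
  moreover have "real (length x) \<le> s"
    using Cons.prems by simp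
  moreover have "real (length (pack_states L)) \<le> real (length L) * (2 * s + 1)"
    using Cons by simp
  ultimately show ?case
    by (simp add: algebra_simps)
qed (simp add: pack_states_def)

section \<open>Walks and spanners\<close>

lemma is_walk_singleton [simp]: "is_walk E u v [x] \<longleftrightarrow> u = x \<and> v = x"
  unfolding is_walk_def by auto

lemma is_walk_Cons_Cons:
  "is_walk E u v (x # y # p) \<longleftrightarrow> x = u \<and> adj E u y \<and> is_walk E y v (y # p)"
  unfolding is_walk_def by (auto simp: nth_Cons split: nat.splits)

lemma is_walk_append:
  "is_walk E u w p \<Longrightarrow> is_walk E w v q \<Longrightarrow> is_walk E u v (p @ tl q)"
proof (induction p arbitrary: u rule: induct_list012)
  case 1 then show ?case by (simp add: is_walk_def)
next
  case (2 x)
  then show ?case by (cases q) (auto simp: is_walk_def)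
next
  case (3 x y p)
  then show ?case by (simp add: is_walk_Cons_Cons)
qed

lemma is_walk_nonempty: "is_walk E u v p \<Longrightarrow> p \<noteq> []"
  by (simp add: is_walk_def)

lemma is_walk_mono: "is_walk E u v p \<Longrightarrow> E \<subseteq> E' \<Longrightarrow> is_walk E' u v p"
  unfolding is_walk_def adj_def by blast

lemma is_walk_map:
  "is_walk E u v p \<Longrightarrow> is_walk (map_prod g g ` E) (g u) (g v) (map g p)"
  unfolding is_walk_def adj_def by (auto simp: hd_map last_map)

lemma gdist_le_walk: "is_walk E u v p \<Longrightarrow> gdist E u v \<le> enat (length p - 1)"
  unfolding gdist_def by (rule INF_lower) auto

lemma gdist_enatE:
  assumes "gdist E u v = enat m"
  obtains p where "is_walk E u v p" "length p - 1 = m"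
proof -
  let ?A = "(\<lambda>p. enat (length p - 1)) ` {p. is_walk E u v p}"
  have "?A \<noteq> {}"
  proof
    assume "?A = {}"
    then have "gdist E u v = \<infinity>"
      unfolding gdist_def by (simp only: \<open>?A = {}\<close> Inf_empty top_enat_def)
    with assms show False by simp
  qed
  then have "Inf ?A \<in> ?A"
    unfolding Inf_enat_def by (auto intro: LeastI)
  then show ?thesis
    using assms that unfolding gdist_def by auto
qed

lemma gdist_edge:
  assumes "adj E u v" "u \<noteq> v"
  shows "gdist E u v = enat 1"
proof (rule antisym)
  have "is_walk E u v [u, v]"
    using assms by (simp add: is_walk_Cons_Cons)
  then show "gdist E u v \<le> enat 1"
    using gdist_le_walk by fastforce
  show "enat 1 \<le> gdist E u v"
    unfolding gdist_def
  proof (rule INF_greatest)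
    fix p assume "p \<in> {p. is_walk E u v p}"
    then have "p \<noteq> []" "hd p = u" "last p = v" by (auto simp: is_walk_def)
    with \<open>u \<noteq> v\<close> have "2 \<le> length p" by (cases p; cases "tl p") auto
    then show "enat 1 \<le> enat (length p - 1)" by simp
  qed
qed

lemma is_spanner_edgeE:
  assumes "is_spanner n G K t" "adj G u v" "u \<noteq> v" "u < n" "v < n"
  obtains q where "is_walk K u v q" "real (length q - 1) \<le> t"
proof -
  obtain m where "gdist K u v = enat m" "real m \<le> t"
    using assms gdist_edge[OF assms(2,3)] unfolding is_spanner_def by force
  then show ?thesis
    using that by (auto elim: gdist_enatE)
qed

lemma is_walk_stretch:
  assumes edge: "\<And>a b. adj G a b \<Longrightarrow> \<exists>q. is_walk K a b q \<and> real (length q - 1) \<le> t"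
  shows "is_walk G u v p \<Longrightarrow> \<exists>q. is_walk K u v q \<and> real (length q - 1) \<le> t * real (length p - 1)"
proof (induction p arbitrary: u rule: induct_list012)
  case 1 then show ?case by (simp add: is_walk_def)
next
  case (2 x) then show ?case by (intro exI[of _ "[u]"]) auto
next
  case (3 x y p)
  then have "adj G u y" "is_walk G y v (y # p)"
    by (auto simp: is_walk_Cons_Cons)
  then obtain q1 q2 where q1: "is_walk K u y q1" "real (length q1 - 1) \<le> t"
    and q2: "is_walk K y v q2" "real (length q2 - 1) \<le> t * real (length (y # p) - 1)"
    using edge "3.IH"(2) by blast
  have "length (q1 @ tl q2) - 1 = (length q1 - 1) + (length q2 - 1)"
    using is_walk_nonempty[OF q1(1)] is_walk_nonempty[OF q2(1)] by (cases q1; cases q2) auto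
  then have "real (length (q1 @ tl q2) - 1) \<le> t * real (length (x # y # p) - 1)"
    using q1(2) q2(2) by (simp add: algebra_simps)
  then show ?case
    using is_walk_append[OF q1(1) q2(1)] by blast
qed

lemma is_spanner_if_edges_stretched:
  assumes "K \<subseteq> G"
    and "\<And>a b. adj G a b \<Longrightarrow> \<exists>q. is_walk K a b q \<and> real (length q - 1) \<le> t"
  shows "is_spanner n G K t"
  unfolding is_spanner_def
proof (intro conjI assms(1) allI impI)
  fix u v m assume "gdist G u v = enat m"
  then obtain p where "is_walk G u v p" "length p - 1 = m"
    by (rule gdist_enatE)
  then obtain q where q: "is_walk K u v q" "real (length q - 1) \<le> t * real m"
    using is_walk_stretch[OF assms(2)] by blast
  then obtain m' where "gdist K u v = enat m'" "m' \<le> length q - 1"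
    using gdist_le_walk[OF q(1)] by (cases "gdist K u v") auto
  with q(2) show "\<exists>m'. gdist K u v = enat m' \<and> real m' \<le> t * real m"
    by (intro exI[of _ m']) auto
qed

section \<open>Restricting a stream to an induced subgraph\<close>

fun upd_edge :: "upd \<Rightarrow> nat \<times> nat" where
  "upd_edge (Ins e) = e"
| "upd_edge (Del e) = e"

fun rename_upd :: "(nat \<times> nat \<Rightarrow> nat \<times> nat) \<Rightarrow> upd \<Rightarrow> upd" where
  "rename_upd h (Ins e) = Ins (h e)"
| "rename_upd h (Del e) = Del (h e)"

definition restrict_stream :: "nat set \<Rightarrow> (nat \<Rightarrow> nat) \<Rightarrow> upd list \<Rightarrow> upd list" where
  "restrict_stream W f \<sigma> = map (rename_upd (map_prod f f)) (filter (\<lambda>x. upd_edge x \<in> W \<times> W) \<sigma>)"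

lemma restrict_stream_Nil [simp]: "restrict_stream W f [] = []"
  by (simp add: restrict_stream_def)

lemma restrict_stream_Cons [simp]:
  "restrict_stream W f (x # \<sigma>) =
     (if upd_edge x \<in> W \<times> W then [rename_upd (map_prod f f) x] else []) @ restrict_stream W f \<sigma>"
  by (simp add: restrict_stream_def)

lemma image_restrict_apply_upd:
  assumes "inj_on f W"
  shows "map_prod f f ` (apply_upd S x \<inter> W \<times> W) =
    (if upd_edge x \<in> W \<times> W then apply_upd (map_prod f f ` (S \<inter> W \<times> W)) (rename_upd (map_prod f f) x)
     else map_prod f f ` (S \<inter> W \<times> W))"
proof (cases "upd_edge x \<in> W \<times> W")
  case True
  have inj: "inj_on (map_prod f f) (W \<times> W)"
    using assms by (auto simp: inj_on_def)
  show ?thesis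
  proof (cases x)
    case (Del e)
    with True have "(S - {e}) \<inter> W \<times> W = (S \<inter> W \<times> W) - {e}" "{e} \<subseteq> W \<times> W"
      by auto
    with Del True show ?thesis
      using inj_on_image_set_diff[OF inj, of "S \<inter> W \<times> W" "{e}"] by auto
  qed (use True in auto)
next
  case False
  then have "apply_upd S x \<inter> W \<times> W = S \<inter> W \<times> W"
    by (cases x) auto
  with False show ?thesis
    by simp
qed

lemma final_graph_restrict_stream:
  assumes "inj_on f W"
  shows "final_graph (restrict_stream W f \<sigma>) = map_prod f f ` (final_graph \<sigma> \<inter> W \<times> W)"
proof -
  have "foldl apply_upd (map_prod f f ` (S \<inter> W \<times> W)) (restrict_stream W f \<sigma>) =
        map_prod f f ` (foldl apply_upd S \<sigma> \<inter> W \<times> W)" for S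
  proof (induction \<sigma> arbitrary: S)
    case (Cons x \<sigma>)
    have "foldl apply_upd (map_prod f f ` (S \<inter> W \<times> W)) (restrict_stream W f (x # \<sigma>)) =
          foldl apply_upd (map_prod f f ` (apply_upd S x \<inter> W \<times> W)) (restrict_stream W f \<sigma>)"
      using image_restrict_apply_upd[OF assms, of S x] by simp
    then show ?case
      using Cons.IH by simp
  qed simp
  from this[of "{}"] show ?thesis
    by (simp add: final_graph_def)
qed

lemma valid_from_Cons:
  "valid_from n S (x # \<sigma>) \<longleftrightarrow>
     (case x of Ins e \<Rightarrow> e \<in> edges n \<and> e \<notin> S | Del e \<Rightarrow> e \<in> S) \<and> valid_from n (apply_upd S x) \<sigma>"
  by (cases x) auto

lemma valid_stream_restrict_stream:
  assumes mono: "strict_mono_on W f" and range: "f ` W \<subseteq> {..<m}"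
    and "valid_stream n \<sigma>"
  shows "valid_stream m (restrict_stream W f \<sigma>)"
proof -
  have inj: "inj_on f W"
    using mono by (rule strict_mono_on_imp_inj_on)
  have "valid_from m (map_prod f f ` (S \<inter> W \<times> W)) (restrict_stream W f \<sigma>)"
    if "valid_from n S \<sigma>" for S
    using that
  proof (induction \<sigma> arbitrary: S)
    case (Cons x \<sigma>)
    let ?T = "map_prod f f ` (S \<inter> W \<times> W)"
    have IH: "valid_from m (map_prod f f ` (apply_upd S x \<inter> W \<times> W)) (restrict_stream W f \<sigma>)"
      using Cons by (simp add: valid_from_Cons)
    show ?case
    proof (cases "upd_edge x \<in> W \<times> W")
      case True
      have "case rename_upd (map_prod f f) x of Ins e \<Rightarrow> e \<in> edges m \<and> e \<notin> ?T | Del e \<Rightarrow> e \<in> ?T"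
      proof (cases x)
        case (Ins e)
        obtain a b where e: "e = (a, b)" "a \<in> W" "b \<in> W"
          using True Ins by auto
        with Ins Cons.prems have "a < b" "b < n" "e \<notin> S"
          by (auto simp: edges_def)
        moreover have "(f a, f b) \<notin> ?T"
          using \<open>e \<notin> S\<close> e inj by (auto dest: inj_onD)
        moreover have "f a < f b" "f b < m"
          using strict_mono_onD[OF mono e(2,3) \<open>a < b\<close>] range e(3) by auto
        ultimately show ?thesis
          using Ins e by (simp add: edges_def)
      next
        case (Del e)
        then show ?thesis
          using True Cons.prems by auto
      qed
      with True IH show ?thesis
        using image_restrict_apply_upd[OF inj, of S x] by (simp add: valid_from_Cons)
    next
      case False
      with IH show ?thesis
        using image_restrict_apply_upd[OF inj, of S x] by simp
    qed
  qed simp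
  from this[of "{}"] assms(3) show ?thesis
    by (simp add: valid_stream_def)
qed

lemma final_graph_subset_edges:
  assumes "valid_stream n \<sigma>"
  shows "final_graph \<sigma> \<subseteq> edges n"
proof -
  have "foldl apply_upd S \<sigma> \<subseteq> edges n" if "valid_from n S \<sigma>" "S \<subseteq> edges n" for S
    using that by (induction \<sigma> arbitrary: S) (auto simp: valid_from_Cons split: upd.splits)
  then show ?thesis
    using assms by (simp add: valid_stream_def final_graph_def)
qed

section \<open>Running copies of an algorithm side by side\<close>

(* All copies share the random choice D: the union bound below does not need independence. *)
definition parallel_alg ::
  "('k \<Rightarrow> nat set) \<Rightarrow> ('k \<Rightarrow> nat \<Rightarrow> nat) \<Rightarrow> ('k \<Rightarrow> nat \<Rightarrow> nat) \<Rightarrow> 'k list \<Rightarrow> det_alg \<Rightarrow> det_alg" where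
  "parallel_alg W f g ks D =
    \<lparr>init_st = pack_states (map (\<lambda>_. init_st D) ks),
     step_fn = (\<lambda>x s. pack_states (map2 (\<lambda>k st.
        if upd_edge x \<in> W k \<times> W k then step_fn D (rename_upd (map_prod (f k) (f k)) x) st else st)
        ks (unpack_states s))),
     out_fn = (\<lambda>s. \<Union>(k, st) \<in> set (zip ks (unpack_states s)). map_prod (g k) (g k) ` out_fn D st)\<rparr>"

lemma run_parallel_alg:
  "run (parallel_alg W f g ks D) \<sigma> = pack_states (map (\<lambda>k. run D (restrict_stream (W k) (f k) \<sigma>)) ks)"
proof -
  have "foldl (\<lambda>s x. step_fn (parallel_alg W f g ks D) x s) (pack_states (map h ks)) \<sigma> =
        pack_states (map (\<lambda>k. foldl (\<lambda>s x. step_fn D x s) (h k) (restrict_stream (W k) (f k) \<sigma>)) ks)"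
    for h
  proof (induction \<sigma> arbitrary: h)
    case (Cons x \<sigma>)
    have "map2 F ks (map h ks) = map (\<lambda>k. F k (h k)) ks" for F :: "'a \<Rightarrow> bool list \<Rightarrow> bool list"
      by (induction ks) auto
    with Cons.IH show ?case
      by (auto simp: parallel_alg_def intro!: arg_cong[where f = pack_states])
  qed simp
  then show ?thesis
    unfolding run_def by (simp add: parallel_alg_def)
qed

lemma out_parallel_alg:
  "out_fn (parallel_alg W f g ks D) (run (parallel_alg W f g ks D) \<sigma>) =
     (\<Union>k\<in>set ks. map_prod (g k) (g k) ` out_fn D (run D (restrict_stream (W k) (f k) \<sigma>)))"
proof -
  have "zip ks (map h ks) = map (\<lambda>k. (k, h k)) ks" for h :: "'a \<Rightarrow> bool list"
    by (induction ks) auto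
  then show ?thesis
    unfolding run_parallel_alg by (auto simp: parallel_alg_def)
qed

(* f must preserve the order, so that an edge (u, v) with u < v is renamed into edges m. *)
definition relabelling :: "nat set \<Rightarrow> nat \<Rightarrow> (nat \<Rightarrow> nat) \<Rightarrow> (nat \<Rightarrow> nat) \<Rightarrow> bool" where
  "relabelling W m f g \<longleftrightarrow> strict_mono_on W f \<and> f ` W \<subseteq> {..<m} \<and> (\<forall>u\<in>W. g (f u) = u)"

lemma is_spanner_UN_relabelled:
  assumes relab: "\<And>k. k \<in> set ks \<Longrightarrow> relabelling (W k) m (f k) (g k)"
    and cover: "\<And>u v. (u, v) \<in> G \<Longrightarrow> \<exists>k\<in>set ks. u \<in> W k \<and> v \<in> W k"
    and G: "G \<subseteq> edges n"
    and spanner: "\<And>k. k \<in> set ks \<Longrightarrow> is_spanner m (map_prod (f k) (f k) ` (G \<inter> W k \<times> W k)) (K k) t"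
  shows "is_spanner n G (\<Union>k\<in>set ks. map_prod (g k) (g k) ` K k) t"
proof (rule is_spanner_if_edges_stretched)
  let ?K = "\<Union>k\<in>set ks. map_prod (g k) (g k) ` K k"
  show "?K \<subseteq> G"
  proof
    fix e assume "e \<in> ?K"
    then obtain k e' where k: "k \<in> set ks" "e' \<in> K k" "e = map_prod (g k) (g k) e'"
      by auto
    then obtain a b where "(a, b) \<in> G" "a \<in> W k" "b \<in> W k" "e' = (f k a, f k b)"
      using spanner[OF k(1)] unfolding is_spanner_def by auto
    then show "e \<in> G"
      using k relab unfolding relabelling_def by auto
  qed
  fix a b assume "adj G a b"
  then obtain k where k: "k \<in> set ks" "a \<in> W k" "b \<in> W k"
    using cover unfolding adj_def by blast
  have "a \<noteq> b"
    using \<open>adj G a b\<close> G by (auto simp: adj_def edges_def)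
  have "strict_mono_on (W k) (f k)" "f k ` W k \<subseteq> {..<m}" "\<forall>u\<in>W k. g k (f k u) = u"
    using relab[OF k(1)] unfolding relabelling_def by auto
  with \<open>a \<noteq> b\<close> k have fk: "f k a \<noteq> f k b" "f k a < m" "f k b < m"
    by (metis strict_mono_on_imp_inj_on inj_on_contraD, blast+)
  have "adj (map_prod (f k) (f k) ` (G \<inter> W k \<times> W k)) (f k a) (f k b)"
    using \<open>adj G a b\<close> k by (auto simp: adj_def)
  then obtain q where q: "is_walk (K k) (f k a) (f k b) q" "real (length q - 1) \<le> t"
    using is_spanner_edgeE[OF spanner[OF k(1)] _ fk] by blast
  have "is_walk (map_prod (g k) (g k) ` K k) a b (map (g k) q)"
    using is_walk_map[OF q(1), of "g k"] \<open>\<forall>u\<in>W k. g k (f k u) = u\<close> k by simp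
  then have "is_walk ?K a b (map (g k) q)"
    by (rule is_walk_mono) (use k(1) in auto)
  with q(2) show "\<exists>q. is_walk ?K a b q \<and> real (length q - 1) \<le> t"
    by (intro exI[of _ "map (g k) q"]) simp
qed

lemma space_le_parallel_alg:
  assumes space: "space_le A m s"
    and A': "A' n = map_pmf (parallel_alg W f g ks) (A m)"
    and relab: "\<And>k. k \<in> set ks \<Longrightarrow> relabelling (W k) m (f k) (g k)"
  shows "space_le A' n (real (length ks) * (2 * s + 1))"
  unfolding space_le_def
proof (intro ballI allI impI)
  fix D' \<sigma> assume "D' \<in> set_pmf (A' n)" "valid_stream n \<sigma>"
  then obtain D where D: "D \<in> set_pmf (A m)" "D' = parallel_alg W f g ks D"
    using A' by auto
  have "real (length (run D (restrict_stream (W k) (f k) \<sigma>))) \<le> s" if "k \<in> set ks" for k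
    using space D(1) valid_stream_restrict_stream[OF _ _ \<open>valid_stream n \<sigma>\<close>] relab[OF that]
    unfolding space_le_def relabelling_def by blast
  then show "real (length (run D' \<sigma>)) \<le> real (length ks) * (2 * s + 1)"
    using length_pack_states_le[of "map (\<lambda>k. run D (restrict_stream (W k) (f k) \<sigma>)) ks" s]
    by (auto simp: D(2) run_parallel_alg)
qed

lemma is_spanner_parallel_alg:
  assumes relab: "\<And>k. k \<in> set ks \<Longrightarrow> relabelling (W k) m (f k) (g k)"
    and cover: "\<And>u v. (u, v) \<in> edges n \<Longrightarrow> \<exists>k\<in>set ks. u \<in> W k \<and> v \<in> W k"
    and valid: "valid_stream n \<sigma>"
    and spanner: "\<And>k. k \<in> set ks \<Longrightarrow> is_spanner m (final_graph (restrict_stream (W k) (f k) \<sigma>))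
                     (out_fn D (run D (restrict_stream (W k) (f k) \<sigma>))) t"
  shows "is_spanner n (final_graph \<sigma>) (out_fn (parallel_alg W f g ks D) (run (parallel_alg W f g ks D) \<sigma>)) t"
  unfolding out_parallel_alg
proof (rule is_spanner_UN_relabelled[OF relab])
  show G: "final_graph \<sigma> \<subseteq> edges n"
    using valid by (rule final_graph_subset_edges)
  show "\<exists>k\<in>set ks. u \<in> W k \<and> v \<in> W k" if "(u, v) \<in> final_graph \<sigma>" for u v
    using cover G that by auto
  fix k assume "k \<in> set ks"
  then have "inj_on (f k) (W k)"
    using relab strict_mono_on_imp_inj_on unfolding relabelling_def by blast
  with spanner[OF \<open>k \<in> set ks\<close>]
  show "is_spanner m (map_prod (f k) (f k) ` (final_graph \<sigma> \<inter> W k \<times> W k))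
          (out_fn D (run D (restrict_stream (W k) (f k) \<sigma>))) t"
    by (simp add: final_graph_restrict_stream)
qed

lemma fail_prob_nonneg: "0 \<le> fail_prob A n t \<sigma>"
  by (simp add: fail_prob_def)

lemma fail_prob_le_1: "fail_prob A n t \<sigma> \<le> 1"
  by (simp add: fail_prob_def)

lemma fail_prob_parallel_alg_le:
  assumes A': "A' n = map_pmf (parallel_alg W f g ks) (A m)"
    and relab: "\<And>k. k \<in> set ks \<Longrightarrow> relabelling (W k) m (f k) (g k)"
    and cover: "\<And>u v. (u, v) \<in> edges n \<Longrightarrow> \<exists>k\<in>set ks. u \<in> W k \<and> v \<in> W k"
    and valid: "valid_stream n \<sigma>"
    and fail: "\<And>k. k \<in> set ks \<Longrightarrow> fail_prob A m t (restrict_stream (W k) (f k) \<sigma>) \<le> \<epsilon>"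
  shows "fail_prob A' n t \<sigma> \<le> real (length ks) * \<epsilon>"
proof -
  let ?\<sigma> = "\<lambda>k. restrict_stream (W k) (f k) \<sigma>"
  let ?bad = "\<lambda>k. {D. \<not> is_spanner m (final_graph (?\<sigma> k)) (out_fn D (run D (?\<sigma> k))) t}"
  have "parallel_alg W f g ks -` {D'. \<not> is_spanner n (final_graph \<sigma>) (out_fn D' (run D' \<sigma>)) t}
          \<subseteq> (\<Union>k\<in>set ks. ?bad k)"
    using is_spanner_parallel_alg[OF relab cover valid] by blast
  then have "fail_prob A' n t \<sigma> \<le> measure_pmf.prob (A m) (\<Union>k\<in>set ks. ?bad k)"
    unfolding fail_prob_def A' measure_map_pmf by (rule measure_pmf.finite_measure_mono) simp
  also have "\<dots> \<le> (\<Sum>k\<in>set ks. measure_pmf.prob (A m) (?bad k))"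
    by (intro measure_pmf.finite_measure_subadditive_finite) auto
  also have "\<dots> \<le> (\<Sum>k\<in>set ks. \<epsilon>)"
    using fail unfolding fail_prob_def by (intro sum_mono) auto
  also have "\<dots> \<le> real (length ks) * \<epsilon>"
  proof (cases "ks = []")
    case False
    then have "0 \<le> \<epsilon>"
      by (rule order_trans[OF fail_prob_nonneg fail[OF hd_in_set]])
    then show ?thesis
      by (simp add: card_length mult_right_mono)
  qed simp
  finally show ?thesis .
qed

section \<open>The block construction\<close>

(* Vertex u lies in block u div b; block fst k is renamed to {0..<b} and block snd k to {b..<2b}. *)
definition block_pair :: "nat \<Rightarrow> nat \<times> nat \<Rightarrow> nat set" where
  "block_pair b k = {u. u div b = fst k \<or> u div b = snd k}"

definition block_pair_index :: "nat \<Rightarrow> nat \<times> nat \<Rightarrow> nat \<Rightarrow> nat" where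
  "block_pair_index b k u = (if u div b = fst k then u mod b else b + u mod b)"

definition block_pair_vertex :: "nat \<Rightarrow> nat \<times> nat \<Rightarrow> nat \<Rightarrow> nat" where
  "block_pair_vertex b k x = (if x < b then fst k * b + x else snd k * b + (x - b))"

definition block_pairs :: "nat \<Rightarrow> (nat \<times> nat) list" where
  "block_pairs p = filter (\<lambda>k. fst k \<le> snd k) (List.product [0..<p] [0..<p])"

lemma strict_mono_on_block_pair_index:
  assumes "0 < b" "fst k \<le> snd k"
  shows "strict_mono_on (block_pair b k) (block_pair_index b k)"
proof (rule strict_mono_onI)
  fix u v assume uv: "u \<in> block_pair b k" "v \<in> block_pair b k" "u < v"
  show "block_pair_index b k u < block_pair_index b k v"
  proof (cases "u div b = v div b")
    case True
    with uv(3) have "u mod b < v mod b"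
      by (metis div_mult_mod_eq add_less_cancel_left)
    with True show ?thesis
      by (simp add: block_pair_index_def)
  next
    case False
    with uv assms(2) have "u div b = fst k" "v div b = snd k" "fst k \<noteq> snd k"
      using div_le_mono[of u v b] unfolding block_pair_def by auto
    then show ?thesis
      using mod_less_divisor[OF assms(1), of u] by (simp add: block_pair_index_def)
  qed
qed

lemma block_pair_index_less:
  assumes "0 < b"
  shows "block_pair_index b k u < 2 * b"
proof -
  have "u mod b < b"
    using assms by simp
  then show ?thesis
    by (simp add: block_pair_index_def)
qed

lemma block_pair_vertex_index:
  assumes "0 < b" "u \<in> block_pair b k"
  shows "block_pair_vertex b k (block_pair_index b k u) = u"
proof -
  have "u mod b < b"
    using assms(1) by simp
  show ?thesis
  proof (cases "u div b = fst k")
    case True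
    then have "fst k * b + u mod b = u"
      unfolding True[symmetric] by simp
    with True \<open>u mod b < b\<close> show ?thesis
      by (simp add: block_pair_index_def block_pair_vertex_def)
  next
    case False
    with assms(2) have "u div b = snd k"
      by (simp add: block_pair_def)
    then have "snd k * b + u mod b = u"
      unfolding \<open>u div b = snd k\<close>[symmetric] by simp
    with False \<open>u mod b < b\<close> show ?thesis
      by (simp add: block_pair_index_def block_pair_vertex_def)
  qed
qed

lemma relabelling_block_pair:
  "0 < b \<Longrightarrow> fst k \<le> snd k \<Longrightarrow>
     relabelling (block_pair b k) (2 * b) (block_pair_index b k) (block_pair_vertex b k)"
  unfolding relabelling_def
  by (auto simp: strict_mono_on_block_pair_index block_pair_index_less block_pair_vertex_index)

lemma block_pairs_cover:
  assumes "0 < b" "(u, v) \<in> edges n" "n div b < p"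
  shows "\<exists>k\<in>set (block_pairs p). u \<in> block_pair b k \<and> v \<in> block_pair b k"
proof -
  have "u div b \<le> v div b" "v div b \<le> n div b"
    using assms(2) by (auto simp: edges_def div_le_mono)
  with assms(3) show ?thesis
    by (intro bexI[of _ "(u div b, v div b)"]) (auto simp: block_pair_def block_pairs_def)
qed

lemma length_block_pairs_le: "length (block_pairs p) \<le> p\<^sup>2"
proof -
  have "length (block_pairs p) \<le> length (List.product [0..<p] [0..<p])"
    unfolding block_pairs_def by (rule length_filter_le)
  then show ?thesis
    by (simp add: power2_eq_square)
qed

definition block_size :: "real \<Rightarrow> nat \<Rightarrow> nat" where
  "block_size \<alpha> n = max 1 (nat \<lceil>real n powr (1 - \<alpha>)\<rceil>)"

definition num_blocks :: "real \<Rightarrow> nat \<Rightarrow> nat" where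
  "num_blocks \<alpha> n = n div block_size \<alpha> n + 1"

definition block_alg :: "rand_alg \<Rightarrow> real \<Rightarrow> rand_alg" where
  "block_alg A \<alpha> n = (let b = block_size \<alpha> n in
     map_pmf (parallel_alg (block_pair b) (block_pair_index b) (block_pair_vertex b)
       (block_pairs (num_blocks \<alpha> n))) (A (2 * b)))"

lemma block_size_pos: "0 < block_size \<alpha> n"
  by (simp add: block_size_def)

lemma relabelling_block_pairs:
  "k \<in> set (block_pairs (num_blocks \<alpha> n)) \<Longrightarrow> relabelling (block_pair (block_size \<alpha> n) k)
     (2 * block_size \<alpha> n) (block_pair_index (block_size \<alpha> n) k) (block_pair_vertex (block_size \<alpha> n) k)"
  using relabelling_block_pair[OF block_size_pos] by (auto simp: block_pairs_def)

lemma space_le_block_alg: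
  assumes "space_le A (2 * block_size \<alpha> n) s"
  shows "space_le (block_alg A \<alpha>) n (real (length (block_pairs (num_blocks \<alpha> n))) * (2 * s + 1))"
  by (rule space_le_parallel_alg[OF assms _ relabelling_block_pairs]) (simp add: block_alg_def Let_def)

lemma fail_prob_block_alg_le:
  assumes "valid_stream n \<sigma>"
    and "\<And>\<sigma>'. valid_stream (2 * block_size \<alpha> n) \<sigma>' \<Longrightarrow> fail_prob A (2 * block_size \<alpha> n) t \<sigma>' \<le> \<epsilon>"
  shows "fail_prob (block_alg A \<alpha>) n t \<sigma> \<le> real (length (block_pairs (num_blocks \<alpha> n))) * \<epsilon>"
proof (rule fail_prob_parallel_alg_le[OF _ relabelling_block_pairs _ assms(1)])
  show "block_alg A \<alpha> n = map_pmf (parallel_alg (block_pair (block_size \<alpha> n)) (block_pair_index (block_size \<alpha> n))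
    (block_pair_vertex (block_size \<alpha> n)) (block_pairs (num_blocks \<alpha> n))) (A (2 * block_size \<alpha> n))"
    by (simp add: block_alg_def Let_def)
  show "\<exists>k\<in>set (block_pairs (num_blocks \<alpha> n)). u \<in> block_pair (block_size \<alpha> n) k \<and> v \<in> block_pair (block_size \<alpha> n) k"
    if "(u, v) \<in> edges n" for u v
    using block_pairs_cover[OF block_size_pos that] by (simp add: num_blocks_def)
  show "fail_prob A (2 * block_size \<alpha> n) t (restrict_stream (block_pair (block_size \<alpha> n) k) (block_pair_index (block_size \<alpha> n) k) \<sigma>) \<le> \<epsilon>"
    if "k \<in> set (block_pairs (num_blocks \<alpha> n))" for k
    using relabelling_block_pairs[OF that] assms
    by (intro assms(2) valid_stream_restrict_stream) (auto simp: relabelling_def)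
qed

section \<open>Soft-O bounds\<close>

lemma eventually_ln_ge_1: "\<forall>\<^sub>F n in sequentially. 1 \<le> ln (real n)"
  using eventually_ge_at_top[of 3]
proof eventually_elim
  case (elim n)
  have "exp 1 \<le> real n"
    using exp_le elim by linarith
  then show ?case
    using ln_mono[of "exp 1" "real n"] by simp
qed

lemma softO_of_le:
  assumes "\<forall>\<^sub>F n in sequentially. \<bar>f n\<bar> \<le> C * g n"
  shows "f \<in> softO g"
  unfolding softO_def using assms by (intro CollectI exI[of _ C] exI[of _ 0]) simp

lemma softO_le_trans:
  assumes "h \<in> softO g" and "\<forall>\<^sub>F n in sequentially. \<bar>f n\<bar> \<le> \<bar>h n\<bar>"
  shows "f \<in> softO g"
proof -
  obtain C k where "\<forall>\<^sub>F n in sequentially. \<bar>h n\<bar> \<le> C * g n * ln (real n) ^ k"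
    using assms(1) unfolding softO_def by blast
  with assms(2) have "\<forall>\<^sub>F n in sequentially. \<bar>f n\<bar> \<le> C * g n * ln (real n) ^ k"
    by eventually_elim (rule order_trans)
  then show ?thesis
    unfolding softO_def by blast
qed

lemma softO_cmult:
  assumes "f \<in> softO g"
  shows "(\<lambda>n. a * f n) \<in> softO g"
proof -
  obtain C k where "\<forall>\<^sub>F n in sequentially. \<bar>f n\<bar> \<le> C * g n * ln (real n) ^ k"
    using assms unfolding softO_def by blast
  then have "\<forall>\<^sub>F n in sequentially. \<bar>a * f n\<bar> \<le> (\<bar>a\<bar> * C) * g n * ln (real n) ^ k"
    by eventually_elim (simp add: abs_mult mult.assoc mult_left_mono)
  then show ?thesis
    unfolding softO_def by blast
qed

lemma softO_add:
  assumes "f1 \<in> softO g" and "f2 \<in> softO g"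
  shows "(\<lambda>n. f1 n + f2 n) \<in> softO g"
proof -
  obtain C1 k1 where 1: "\<forall>\<^sub>F n in sequentially. \<bar>f1 n\<bar> \<le> C1 * g n * ln (real n) ^ k1"
    using assms(1) unfolding softO_def by blast
  obtain C2 k2 where 2: "\<forall>\<^sub>F n in sequentially. \<bar>f2 n\<bar> \<le> C2 * g n * ln (real n) ^ k2"
    using assms(2) unfolding softO_def by blast
  have "\<forall>\<^sub>F n in sequentially. \<bar>f1 n + f2 n\<bar> \<le> (C1 + C2) * g n * ln (real n) ^ (k1 + k2)"
    using 1 2 eventually_ln_ge_1
  proof eventually_elim
    case (elim n)
    let ?L = "ln (real n)"
    have "1 \<le> ?L ^ k1" "1 \<le> ?L ^ k2"
      using elim(3) by (simp_all add: one_le_power)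
    then have "C1 * g n * ?L ^ k1 \<le> C1 * g n * ?L ^ k1 * ?L ^ k2"
      and "C2 * g n * ?L ^ k2 \<le> C2 * g n * ?L ^ k2 * ?L ^ k1"
      using elim(1,2) abs_ge_zero[of "f1 n"] abs_ge_zero[of "f2 n"]
      by (auto intro!: mult_le_cancel_left1[THEN iffD2] order_trans[OF _ elim(1)])
    with elim(1,2) show ?case
      by (simp add: power_add algebra_simps)
  qed
  then show ?thesis
    unfolding softO_def by blast
qed

lemma softO_mult:
  assumes "f1 \<in> softO g1" and "f2 \<in> softO g2"
  shows "(\<lambda>n. f1 n * f2 n) \<in> softO (\<lambda>n. g1 n * g2 n)"
proof -
  obtain C1 k1 where 1: "\<forall>\<^sub>F n in sequentially. \<bar>f1 n\<bar> \<le> C1 * g1 n * ln (real n) ^ k1"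
    using assms(1) unfolding softO_def by blast
  obtain C2 k2 where 2: "\<forall>\<^sub>F n in sequentially. \<bar>f2 n\<bar> \<le> C2 * g2 n * ln (real n) ^ k2"
    using assms(2) unfolding softO_def by blast
  have "\<forall>\<^sub>F n in sequentially. \<bar>f1 n * f2 n\<bar> \<le> (C1 * C2) * (g1 n * g2 n) * ln (real n) ^ (k1 + k2)"
    using 1 2
  proof eventually_elim
    case (elim n)
    then have "\<bar>f1 n\<bar> * \<bar>f2 n\<bar> \<le> (C1 * g1 n * ln (real n) ^ k1) * (C2 * g2 n * ln (real n) ^ k2)"
      by (intro mult_mono) (auto intro: order_trans[OF abs_ge_zero])
    then show ?case
      by (simp add: abs_mult power_add algebra_simps)
  qed
  then show ?thesis
    unfolding softO_def by blast
qed

lemma softO_powr_mult: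
  assumes "f1 \<in> softO (\<lambda>n. real n powr a)" and "f2 \<in> softO (\<lambda>n. real n powr b)"
  shows "(\<lambda>n. f1 n * f2 n) \<in> softO (\<lambda>n. real n powr (a + b))"
  using softO_mult[OF assms] by (simp add: powr_add)

lemma powr_ln_power_le:
  fixes H K x e \<gamma> :: real
  assumes H: "1 \<le> H" "H \<le> K * x powr e"
    and "1 \<le> K" "1 \<le> ln x" "0 \<le> \<gamma>" "0 \<le> e" and x: "0 < x"
  shows "H powr \<gamma> * ln H ^ k \<le> (K powr \<gamma> * (ln K + e) ^ k) * (x powr (\<gamma> * e) * ln x ^ k)"
proof -
  have "ln H \<le> ln (K * x powr e)"
    using H \<open>1 \<le> K\<close> by (subst ln_le_cancel_iff) auto
  also have "\<dots> = ln K + e * ln x"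
    using x \<open>1 \<le> K\<close> by (simp add: ln_mult ln_powr)
  also have "\<dots> \<le> (ln K + e) * ln x"
    using assms(3-6) by (simp add: algebra_simps) (simp add: mult_le_cancel_left1)
  finally have ln_H: "ln H \<le> (ln K + e) * ln x" .
  have "H powr \<gamma> \<le> (K * x powr e) powr \<gamma>"
    using H \<open>0 \<le> \<gamma>\<close> by (intro powr_mono2) auto
  also have "\<dots> = K powr \<gamma> * x powr (\<gamma> * e)"
    using \<open>1 \<le> K\<close> by (simp add: powr_mult powr_powr mult.commute)
  finally have "H powr \<gamma> * ln H ^ k \<le> (K powr \<gamma> * x powr (\<gamma> * e)) * ((ln K + e) * ln x) ^ k"
    using H(1) ln_H by (intro mult_mono power_mono) auto
  then show ?thesis
    by (simp add: power_mult_distrib mult_ac)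
qed

lemma softO_powr_comp:
  assumes f: "f \<in> softO (\<lambda>m. real m powr \<gamma>)" and "0 \<le> \<gamma>" "0 \<le> e"
    and h: "filterlim h at_top sequentially"
    and h_le: "\<forall>\<^sub>F n in sequentially. real (h n) \<le> K * real n powr e"
  shows "(\<lambda>n. f (h n)) \<in> softO (\<lambda>n. real n powr (\<gamma> * e))"
proof -
  have h_ev: "\<forall>\<^sub>F n in sequentially. P (h n)" if "\<forall>\<^sub>F m in sequentially. P m" for P
    using h that unfolding filterlim_iff by blast
  obtain C k where "\<forall>\<^sub>F m in sequentially. \<bar>f m\<bar> \<le> C * real m powr \<gamma> * ln (real m) ^ k"
    using f unfolding softO_def by blast
  then have f_h: "\<forall>\<^sub>F n in sequentially. \<bar>f (h n)\<bar> \<le> C * real (h n) powr \<gamma> * ln (real (h n)) ^ k"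
    by (rule h_ev)
  have h_ge: "\<forall>\<^sub>F n in sequentially. 1 \<le> h n"
    by (rule h_ev) (rule eventually_ge_at_top)
  define K' where "K' = max K 1"
  have "\<forall>\<^sub>F n in sequentially.
          \<bar>f (h n)\<bar> \<le> (\<bar>C\<bar> * (K' powr \<gamma> * (ln K' + e) ^ k)) * real n powr (\<gamma> * e) * ln (real n) ^ k"
    using f_h h_ge h_le eventually_ln_ge_1 eventually_gt_at_top[of 0]
  proof eventually_elim
    case (elim n)
    let ?H = "real (h n)"
    have "K * real n powr e \<le> K' * real n powr e"
      unfolding K'_def by (intro mult_right_mono) auto
    with elim(3) have "?H \<le> K' * real n powr e"
      by linarith
    then have "?H powr \<gamma> * ln ?H ^ k \<le>
        (K' powr \<gamma> * (ln K' + e) ^ k) * (real n powr (\<gamma> * e) * ln (real n) ^ k)"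
      using elim(2,4,5) assms(2,3) by (intro powr_ln_power_le) (auto simp: K'_def)
    moreover have "C * (?H powr \<gamma> * ln ?H ^ k) \<le> \<bar>C\<bar> * (?H powr \<gamma> * ln ?H ^ k)"
      using elim(2) by (intro mult_right_mono) auto
    ultimately show ?case
      using elim(1) by (simp add: mult.assoc) (meson abs_ge_zero mult_left_mono order_trans)
  qed
  then show ?thesis
    unfolding softO_def by blast
qed

section \<open>Asymptotics of the block construction\<close>

lemma block_size_ge: "real n powr (1 - \<alpha>) \<le> real (block_size \<alpha> n)"
proof -
  have "real n powr (1 - \<alpha>) \<le> real (nat \<lceil>real n powr (1 - \<alpha>)\<rceil>)"
    by (rule real_nat_ceiling_ge)
  also have "\<dots> \<le> real (block_size \<alpha> n)"
    by (simp add: block_size_def)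
  finally show ?thesis .
qed

lemma block_size_le:
  assumes "\<alpha> \<le> 1" "1 \<le> n"
  shows "real (block_size \<alpha> n) \<le> 2 * real n powr (1 - \<alpha>)"
proof -
  have "1 \<le> real n powr (1 - \<alpha>)"
    using assms by (simp add: ge_one_powr_ge_zero)
  moreover from this have "real (nat \<lceil>real n powr (1 - \<alpha>)\<rceil>) \<le> real n powr (1 - \<alpha>) + 1"
    by (simp add: of_nat_nat)
  ultimately have "real (nat \<lceil>real n powr (1 - \<alpha>)\<rceil>) \<le> 2 * real n powr (1 - \<alpha>)"
    and "1 \<le> 2 * real n powr (1 - \<alpha>)"
    by linarith+
  then show ?thesis
    unfolding block_size_def by (simp add: of_nat_max)
qed

lemma num_blocks_le:
  assumes "0 \<le> \<alpha>" "1 \<le> n"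
  shows "real (num_blocks \<alpha> n) \<le> 2 * real n powr \<alpha>"
proof -
  have n: "0 < real n"
    using assms(2) by simp
  have "real (n div block_size \<alpha> n) \<le> real n / real (block_size \<alpha> n)"
    by (rule of_nat_div_le_of_nat)
  also have "\<dots> \<le> real n / real n powr (1 - \<alpha>)"
    using block_size_ge[of n \<alpha>] block_size_pos[of \<alpha> n] n by (intro divide_left_mono) auto
  also have "\<dots> = real n powr \<alpha>"
    using n by (simp add: powr_diff)
  finally show ?thesis
    using ge_one_powr_ge_zero[of "real n" \<alpha>] assms unfolding num_blocks_def by simp
qed

lemma filterlim_block_size:
  assumes "\<alpha> < 1"
  shows "filterlim (\<lambda>n. 2 * block_size \<alpha> n) at_top sequentially"
  unfolding filterlim_sequentially_iff_filterlim_real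
proof (rule filterlim_at_top_mono)
  show "filterlim (\<lambda>n. real n powr (1 - \<alpha>)) at_top sequentially"
    using assms by real_asymp
  show "\<forall>\<^sub>F n in sequentially. real n powr (1 - \<alpha>) \<le> real (2 * block_size \<alpha> n)"
  proof (intro always_eventually allI)
    show "real n powr (1 - \<alpha>) \<le> real (2 * block_size \<alpha> n)" for n
      using block_size_ge[of n \<alpha>] by simp
  qed
qed

lemma softO_length_block_pairs:
  assumes "0 \<le> \<alpha>"
  shows "(\<lambda>n. real (length (block_pairs (num_blocks \<alpha> n)))) \<in> softO (\<lambda>n. real n powr (2 * \<alpha>))"
proof (rule softO_of_le[where C = 4])
  show "\<forall>\<^sub>F n in sequentially. \<bar>real (length (block_pairs (num_blocks \<alpha> n)))\<bar> \<le> 4 * real n powr (2 * \<alpha>)"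
    using eventually_ge_at_top[of 1]
  proof eventually_elim
    case (elim n)
    have "real (length (block_pairs (num_blocks \<alpha> n))) \<le> real (num_blocks \<alpha> n) ^ 2"
      using length_block_pairs_le of_nat_mono by fastforce
    also have "\<dots> \<le> (2 * real n powr \<alpha>) ^ 2"
      using num_blocks_le[OF assms elim] by (intro power_mono) auto
    also have "\<dots> = 4 * real n powr (2 * \<alpha>)"
      by (simp add: power2_eq_square powr_add[symmetric])
    finally show ?case
      by simp
  qed
qed

lemma softO_block_space:
  assumes "0 < \<alpha>" "\<alpha> < 1" and s: "s \<in> softO (\<lambda>n. real n)"
  shows "(\<lambda>n. real (length (block_pairs (num_blocks \<alpha> n))) * (2 * s (2 * block_size \<alpha> n) + 1))
           \<in> softO (\<lambda>n. real n powr (1 + \<alpha>))"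
proof -
  have "(\<lambda>n. s (2 * block_size \<alpha> n)) \<in> softO (\<lambda>n. real n powr (1 * (1 - \<alpha>)))"
  proof (rule softO_powr_comp[where K = 4])
    show "s \<in> softO (\<lambda>m. real m powr 1)"
      using s by simp
    show "\<forall>\<^sub>F n in sequentially. real (2 * block_size \<alpha> n) \<le> 4 * real n powr (1 - \<alpha>)"
      using eventually_ge_at_top[of 1] by eventually_elim (use block_size_le assms in force)
  qed (use assms filterlim_block_size in auto)
  moreover have "(\<lambda>n. 1) \<in> softO (\<lambda>n. real n powr (1 - \<alpha>))"
  proof (rule softO_of_le[where C = 1])
    show "\<forall>\<^sub>F n in sequentially. \<bar>1\<bar> \<le> 1 * real n powr (1 - \<alpha>)"
      using eventually_ge_at_top[of 1] by eventually_elim (use assms in \<open>simp add: ge_one_powr_ge_zero\<close>)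
  qed
  ultimately have "(\<lambda>n. 2 * s (2 * block_size \<alpha> n) + 1) \<in> softO (\<lambda>n. real n powr (1 - \<alpha>))"
    by (auto intro: softO_add softO_cmult)
  then have "(\<lambda>n. real (length (block_pairs (num_blocks \<alpha> n))) * (2 * s (2 * block_size \<alpha> n) + 1))
             \<in> softO (\<lambda>n. real n powr (2 * \<alpha> + (1 - \<alpha>)))"
    using assms(1) by (intro softO_powr_mult softO_length_block_pairs) simp_all
  moreover have "2 * \<alpha> + (1 - \<alpha>) = 1 + \<alpha>"
    by simp
  ultimately show ?thesis
    by simp
qed

lemma softO_block_stretch:
  assumes "\<alpha> < 1" "0 \<le> \<beta>" and t: "t \<in> softO (\<lambda>n. real n powr \<beta>)"
  shows "(\<lambda>n. t (2 * block_size \<alpha> n)) \<in> softO (\<lambda>n. real n powr (\<beta> * (1 - \<alpha>)))"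
proof (rule softO_powr_comp[OF t assms(2) _ filterlim_block_size[OF assms(1)], where K = 4])
  show "\<forall>\<^sub>F n in sequentially. real (2 * block_size \<alpha> n) \<le> 4 * real n powr (1 - \<alpha>)"
    using eventually_ge_at_top[of 1] by eventually_elim (use block_size_le assms in force)
qed (use assms in auto)

lemma softO_block_fail:
  assumes "0 < \<alpha>" "\<alpha> < 1" "0 \<le> c"
  shows "(\<lambda>n. real (length (block_pairs (num_blocks \<alpha> n))) *
            (if M \<le> 2 * block_size \<alpha> n then real (2 * block_size \<alpha> n) powr - c else 1))
           \<in> softO (\<lambda>n. real n powr ((2 + c) * \<alpha> - c))"
proof (rule softO_le_trans)
  have "(\<lambda>n. real (2 * block_size \<alpha> n) powr - c) \<in> softO (\<lambda>n. real n powr (- c * (1 - \<alpha>)))"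
  proof (rule softO_of_le[where C = 1])
    show "\<forall>\<^sub>F n in sequentially. \<bar>real (2 * block_size \<alpha> n) powr - c\<bar> \<le> 1 * real n powr (- c * (1 - \<alpha>))"
      using eventually_ge_at_top[of 1]
    proof eventually_elim
      case (elim n)
      have "real (2 * block_size \<alpha> n) powr - c \<le> (real n powr (1 - \<alpha>)) powr - c"
        using block_size_ge[of n \<alpha>] elim assms(3) by (intro powr_mono2') auto
      then show ?case
        by (simp add: powr_powr mult.commute)
    qed
  qed
  then have "(\<lambda>n. real (length (block_pairs (num_blocks \<alpha> n))) * real (2 * block_size \<alpha> n) powr - c)
             \<in> softO (\<lambda>n. real n powr (2 * \<alpha> + - c * (1 - \<alpha>)))"
    using assms(1) by (intro softO_powr_mult softO_length_block_pairs) simp_all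
  moreover have "2 * \<alpha> + - c * (1 - \<alpha>) = (2 + c) * \<alpha> - c"
    by (simp add: algebra_simps)
  ultimately show "(\<lambda>n. real (length (block_pairs (num_blocks \<alpha> n))) * real (2 * block_size \<alpha> n) powr - c)
          \<in> softO (\<lambda>n. real n powr ((2 + c) * \<alpha> - c))"
    by simp
  show "\<forall>\<^sub>F n in sequentially. \<bar>real (length (block_pairs (num_blocks \<alpha> n))) *
            (if M \<le> 2 * block_size \<alpha> n then real (2 * block_size \<alpha> n) powr - c else 1)\<bar>
          \<le> \<bar>real (length (block_pairs (num_blocks \<alpha> n))) * real (2 * block_size \<alpha> n) powr - c\<bar>"
    using filterlim_block_size[OF assms(2)] unfolding filterlim_at_top
    by (auto elim: eventually_mono)
qed

theorem theorem4p7: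
  fixes Alg :: rand_alg and \<beta> c :: real
  assumes "0 < \<beta>" and "\<beta> < 1" and "0 < c"
    and "\<exists>s t. s \<in> softO (\<lambda>n. real n) \<and> t \<in> softO (\<lambda>n. real n powr \<beta>) \<and>
           (\<forall>n. space_le Alg n (s n)) \<and>
           (\<forall>\<^sub>F n in sequentially. \<forall>\<sigma>. valid_stream n \<sigma> \<longrightarrow>
               fail_prob Alg n (t n) \<sigma> \<le> real n powr (- c))"
  shows "\<forall>\<alpha>::real. 0 < \<alpha> \<and> \<alpha> < 1 \<longrightarrow>
    (\<exists>Alg' :: rand_alg. \<exists>s t \<delta>.
       s \<in> softO (\<lambda>n. real n powr (1 + \<alpha>)) \<and>
       t \<in> softO (\<lambda>n. real n powr (\<beta> * (1 - \<alpha>))) \<and>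
       \<delta> \<in> softO (\<lambda>n. real n powr ((2 + c) * \<alpha> - c)) \<and>
       (\<forall>n. space_le Alg' n (s n)) \<and>
       (\<forall>n \<sigma>. valid_stream n \<sigma> \<longrightarrow> fail_prob Alg' n (t n) \<sigma> \<le> \<delta> n))"
proof (intro allI impI)
  fix \<alpha> :: real assume "0 < \<alpha> \<and> \<alpha> < 1"
  then have \<alpha>: "0 < \<alpha>" "\<alpha> < 1" by auto
  obtain s t M where s: "s \<in> softO (\<lambda>n. real n)" and t: "t \<in> softO (\<lambda>n. real n powr \<beta>)"
    and space: "\<And>n. space_le Alg n (s n)"
    and fail: "\<And>m \<sigma>. M \<le> m \<Longrightarrow> valid_stream m \<sigma> \<Longrightarrow> fail_prob Alg m (t m) \<sigma> \<le> real m powr (- c)"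
    using assms(4) unfolding eventually_sequentially by blast
  let ?m = "\<lambda>n. 2 * block_size \<alpha> n"
  let ?N = "\<lambda>n. real (length (block_pairs (num_blocks \<alpha> n)))"
  show "\<exists>Alg' s t \<delta>. s \<in> softO (\<lambda>n. real n powr (1 + \<alpha>)) \<and> t \<in> softO (\<lambda>n. real n powr (\<beta> * (1 - \<alpha>))) \<and>
      \<delta> \<in> softO (\<lambda>n. real n powr ((2 + c) * \<alpha> - c)) \<and> (\<forall>n. space_le Alg' n (s n)) \<and>
      (\<forall>n \<sigma>. valid_stream n \<sigma> \<longrightarrow> fail_prob Alg' n (t n) \<sigma> \<le> \<delta> n)"
  proof (intro exI conjI allI impI)
    show "(\<lambda>n. ?N n * (2 * s (?m n) + 1)) \<in> softO (\<lambda>n. real n powr (1 + \<alpha>))"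
      by (rule softO_block_space[OF \<alpha> s])
    show "(\<lambda>n. t (?m n)) \<in> softO (\<lambda>n. real n powr (\<beta> * (1 - \<alpha>)))"
      using softO_block_stretch[OF \<alpha>(2) _ t] assms(1) by simp
    show "(\<lambda>n. ?N n * (if M \<le> ?m n then real (?m n) powr - c else 1))
            \<in> softO (\<lambda>n. real n powr ((2 + c) * \<alpha> - c))"
      using softO_block_fail[OF \<alpha>] assms(3) by simp
    show "space_le (block_alg Alg \<alpha>) n (?N n * (2 * s (?m n) + 1))" for n
      by (rule space_le_block_alg[OF space])
    \<comment> \<open>For m < M the hypothesis on Alg says nothing and the trivial bound 1 is used.\<close>
    show "fail_prob (block_alg Alg \<alpha>) n (t (?m n)) \<sigma> \<le> ?N n * (if M \<le> ?m n then real (?m n) powr - c else 1)"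
      if "valid_stream n \<sigma>" for n \<sigma>
      using that by (rule fail_prob_block_alg_le) (simp add: fail fail_prob_le_1 del: of_nat_mult)
  qed
qed

end
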